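(* Let $(\pi_h^k)_{k\ge 0}$ be the sequence of joint safety policies produced by the multi-agent safety policy iteration (defined in the context) from an arbitrary initial joint policy $\pi_h^0$, with an arbitrary ordering of the agents chosen at each iteration. Then: (a) for every $x\in\mathcal X$ and every $k\ge0$, $V_h^{\pi_h^{k+1}}(x)\ge V_h^{\pi_h^{k}}(x)$, and the sequence $(V_h^{\pi_h^k})_k$ converges; (b) under the tie-breaking convention in the context, the joint safety policies $\pi_h^k$ converge, i.e. are constant from some index on, to a joint policy $\pi_h^*=(\pi_{h,1}^*,\dots,\pi_{h,n}^* )$. This limit is a Nash equilibrium for the safety value function: for every agent $i\in\mathcal N$, every individual policy $\pi_{h,i}:\mathcal X\to\mathcal U_i$ and every $x\in\mathcal X$, $$V_h^{(\pi_{h,i},\pi^*_{h,-i})}(x)\le V_h^{\pi_h^*}(x).$$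
   Context: Setting. Let $\mathcal N=\{1,\dots,n\}$ be a finite set of agents, $\mathcal X$ a finite state space, $\mathcal U_i$ a finite action set for agent $i$, $\mathcal U=\prod_{i=1}^n\mathcal U_i$ the joint action space, $f:\mathcal X\times\mathcal U\to\mathcal X$ the deterministic dynamics, $h:\mathcal X\to\mathbb R$ a constraint function, and $\gamma_h\in(0,1)$ a safety discount factor. An individual policy of agent $i$ is a map $\pi_i:\mathcal X\to\mathcal U_i$. A joint policy is $\pi=(\pi_1,\dots,\pi_n)$, with $\pi(x)=(\pi_1(x),\dots,\pi_n(x))$. For a joint action $u$ and an agent $i$, $(u_i',u_{-i})$ denotes $u$ with its $i$-th component replaced by $u_i'$. The notation $(\pi_i',\pi_{-i})$ is used in the same way for policies. Safety value function. For a joint policy $\pi$, set $V_h^{\pi}(x)=\min_{t\in\mathbb N}\gamma_h^{t+1}h(x_t)$, where $x_0=x$ and $x_{t+1}=f(x_t,\pi(x_t))$. Multi-agent safety policy iteration. Given $\pi_h^k$, compute $V_h^{\pi_h^k}$ and choose an ordering $i_1,\dots,i_n$ of $\mathcal N$. Then, for each $x\in\mathcal X$ and for $j=1,\dots,n$ in turn, set $$\pi_{h,i_j}^{k+1}(x)\in\arg\max_{v\in\mathcal U_{i_j}}V_h^{\pi_h^k}\big(f(x,w^{(j)})\big),$$ where $w^{(j)}\in\mathcal U$ is the joint action with component $i_j$ equal to $v$, component $i_l$ equal to $\pi_{h,i_l}^{k+1}(x)$ for $l<j$, and component $i_l$ equal to $\pi_{h,i_l}^{k}(x)$ for $l>j$.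 Tie-breaking convention. In every argmax, if the agent's current action ($\pi^k_{h,i_j}(x)$ here) is a maximizer, it is selected. Otherwise, a maximizer is selected by a fixed deterministic rule. *)

theory Defs
  imports Complex_Main
begin

text \<open>Agents are the elements of a finite type 'i; states the elements of a finite type 'x.
  All individual actions live in a common type 'a; agent i's action set is U i.\<close>

definition valid_policy :: "('i \<Rightarrow> 'a set) \<Rightarrow> ('x \<Rightarrow> 'i \<Rightarrow> 'a) \<Rightarrow> bool" where
  "valid_policy U \<pi> \<longleftrightarrow> (\<forall>x i. \<pi> x i \<in> U i)"

definition traj :: "('x \<Rightarrow> ('i \<Rightarrow> 'a) \<Rightarrow> 'x) \<Rightarrow> ('x \<Rightarrow> 'i \<Rightarrow> 'a) \<Rightarrow> 'x \<Rightarrow> nat \<Rightarrow> 'x" where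
  "traj f \<pi> x t = ((\<lambda>s. f s (\<pi> s)) ^^ t) x"

definition safety_value ::
  "('x \<Rightarrow> ('i \<Rightarrow> 'a) \<Rightarrow> 'x) \<Rightarrow> ('x \<Rightarrow> real) \<Rightarrow> real \<Rightarrow> ('x \<Rightarrow> 'i \<Rightarrow> 'a) \<Rightarrow> 'x \<Rightarrow> real" where
  "safety_value f h \<gamma> \<pi> x = (INF t. \<gamma> ^ (t + 1) * h (traj f \<pi> x t))"

definition agent_ordering :: "'i list \<Rightarrow> bool" where
  "agent_ordering ord \<longleftrightarrow> distinct ord \<and> set ord = UNIV"

definition partial_joint ::
  "'i list \<Rightarrow> ('x \<Rightarrow> 'i \<Rightarrow> 'a) \<Rightarrow> ('x \<Rightarrow> 'i \<Rightarrow> 'a) \<Rightarrow> 'x \<Rightarrow> nat \<Rightarrow> 'i \<Rightarrow> 'a" where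
  "partial_joint ord \<pi> \<pi>' x j = (\<lambda>i. if i \<in> set (take j ord) then \<pi>' x i else \<pi> x i)"

definition upd_value ::
  "('x \<Rightarrow> ('i \<Rightarrow> 'a) \<Rightarrow> 'x) \<Rightarrow> ('x \<Rightarrow> real) \<Rightarrow> real \<Rightarrow> 'i list \<Rightarrow>
    ('x \<Rightarrow> 'i \<Rightarrow> 'a) \<Rightarrow> ('x \<Rightarrow> 'i \<Rightarrow> 'a) \<Rightarrow> 'x \<Rightarrow> nat \<Rightarrow> 'a \<Rightarrow> real" where
  "upd_value f h \<gamma> ord \<pi> \<pi>' x j v =
     safety_value f h \<gamma> \<pi> (f x ((partial_joint ord \<pi> \<pi>' x j)(ord ! j := v)))"

definition maspi_step ::
  "('i \<Rightarrow> 'a set) \<Rightarrow> ('x \<Rightarrow> ('i \<Rightarrow> 'a) \<Rightarrow> 'x) \<Rightarrow> ('x \<Rightarrow> real) \<Rightarrow> real \<Rightarrow> 'i list \<Rightarrow>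
    ('x \<Rightarrow> 'i \<Rightarrow> 'a) \<Rightarrow> ('x \<Rightarrow> 'i \<Rightarrow> 'a) \<Rightarrow> bool" where
  "maspi_step U f h \<gamma> ord \<pi> \<pi>' \<longleftrightarrow>
     (\<forall>x. \<forall>j < length ord.
        \<pi>' x (ord ! j) \<in> U (ord ! j) \<and>
        (\<forall>v \<in> U (ord ! j). upd_value f h \<gamma> ord \<pi> \<pi>' x j v
                            \<le> upd_value f h \<gamma> ord \<pi> \<pi>' x j (\<pi>' x (ord ! j))))"

definition maspi_tiebreak ::
  "('i \<Rightarrow> 'a set) \<Rightarrow> ('x \<Rightarrow> ('i \<Rightarrow> 'a) \<Rightarrow> 'x) \<Rightarrow> ('x \<Rightarrow> real) \<Rightarrow> real \<Rightarrow> 'i list \<Rightarrow>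
    ('x \<Rightarrow> 'i \<Rightarrow> 'a) \<Rightarrow> ('x \<Rightarrow> 'i \<Rightarrow> 'a) \<Rightarrow> bool" where
  "maspi_tiebreak U f h \<gamma> ord \<pi> \<pi>' \<longleftrightarrow>
     (\<forall>x. \<forall>j < length ord.
        (\<forall>v \<in> U (ord ! j). upd_value f h \<gamma> ord \<pi> \<pi>' x j v
                            \<le> upd_value f h \<gamma> ord \<pi> \<pi>' x j (\<pi> x (ord ! j)))
        \<longrightarrow> \<pi>' x (ord ! j) = \<pi> x (ord ! j))"

definition safety_nash ::
  "('i \<Rightarrow> 'a set) \<Rightarrow> ('x \<Rightarrow> ('i \<Rightarrow> 'a) \<Rightarrow> 'x) \<Rightarrow> ('x \<Rightarrow> real) \<Rightarrow> real \<Rightarrow>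
    ('x \<Rightarrow> 'i \<Rightarrow> 'a) \<Rightarrow> bool" where
  "safety_nash U f h \<gamma> \<pi>s \<longleftrightarrow>
     (\<forall>i. \<forall>\<pi>i :: 'x \<Rightarrow> 'a. (\<forall>x. \<pi>i x \<in> U i) \<longrightarrow>
        (\<forall>x. safety_value f h \<gamma> (\<lambda>y. (\<pi>s y)(i := \<pi>i y)) x \<le> safety_value f h \<gamma> \<pi>s x))"

end

theory Submission
  imports Defs "HOL-Library.FuncSet"
begin

text \<open>The safety value satisfies the Bellman equation \<open>V x = \<gamma> min (h x) (V (f x (\<pi> x)))\<close>,
  and it dominates every subsolution and is dominated by every bounded-below supersolution of
  that equation. A sweep of sequential argmax updates can only raise the one-step value
  \<open>V\<^sup>\<pi>\<^sup>k (f x \<cdot>)\<close>, so \<open>V\<^sup>\<pi>\<^sup>k\<close> is a subsolution for \<open>\<pi>\<^sup>k\<^sup>+\<^sup>1\<close>: the values increase, and they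
  are bounded. Under the tie-breaking rule a policy changes at \<open>x\<close> only if this one-step
  value strictly increases; the one-step values are nondecreasing in \<open>k\<close> and take finitely many
  values, so the policies stabilise. At the limit no unilateral one-step deviation helps, so
  \<open>V\<^sup>\<pi>\<^sup>*\<close> is a supersolution for every unilateral deviation, which is the Nash property.\<close>

section \<open>Sequential updates along an ordering\<close>

lemma partial_joint_0: "partial_joint ord p q x 0 = p x"
  by (auto simp: partial_joint_def)

lemma partial_joint_length: "set ord = UNIV \<Longrightarrow> partial_joint ord p q x (length ord) = q x"
  by (auto simp: partial_joint_def)

lemma partial_joint_upd_old:
  assumes "distinct ord" "j < length ord"
  shows "(partial_joint ord p q x j)(ord ! j := p x (ord ! j)) = partial_joint ord p q x j"
  using assms by (auto simp: partial_joint_def fun_eq_iff in_set_conv_nth nth_eq_iff_index_eq)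

lemma partial_joint_upd_new:
  assumes "j < length ord"
  shows "(partial_joint ord p q x j)(ord ! j := q x (ord ! j)) = partial_joint ord p q x (Suc j)"
  using assms by (auto simp: partial_joint_def fun_eq_iff take_Suc_conv_app_nth)

lemma finite_valid_policies:
  assumes "finite (UNIV :: 'x set)" "finite (UNIV :: 'i set)" "\<And>i. finite (U i)"
  shows "finite {p :: 'x \<Rightarrow> 'i \<Rightarrow> 'a. valid_policy U p}"
proof (rule finite_subset)
  show "{p :: 'x \<Rightarrow> 'i \<Rightarrow> 'a. valid_policy U p} \<subseteq> PiE UNIV (\<lambda>_. PiE UNIV U)"
    by (auto simp: valid_policy_def PiE_UNIV_domain)
  show "finite (PiE (UNIV :: 'x set) (\<lambda>_. PiE (UNIV :: 'i set) U))"
    using assms by (intro finite_PiE) auto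
qed

lemma maspi_step_valid:
  assumes "agent_ordering ord" "maspi_step U f h \<gamma> ord p q"
  shows "valid_policy U q"
  unfolding valid_policy_def
proof (intro allI)
  fix x i
  obtain j where "j < length ord" "ord ! j = i"
    using assms(1) by (metis UNIV_I agent_ordering_def in_set_conv_nth)
  then show "q x i \<in> U i"
    using assms(2) unfolding maspi_step_def by blast
qed

lemma mono_finite_range_eventually_const:
  fixes s :: "nat \<Rightarrow> 'a::order"
  assumes "mono s" "finite (range s)"
  shows "\<exists>K. \<forall>k\<ge>K. s k = s K"
proof -
  obtain K where K: "\<forall>s' \<in> range s. s K \<le> s' \<longrightarrow> s K = s'"
    using finite_has_maximal[OF assms(2)] by auto
  have "s k = s K" if "K \<le> k" for k
    using K monoD[OF assms(1) that] by auto
  then show ?thesis by blast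
qed

locale safety_game =
  fixes U :: "'i \<Rightarrow> 'a set"
    and f :: "'x \<Rightarrow> ('i \<Rightarrow> 'a) \<Rightarrow> 'x"
    and h :: "'x \<Rightarrow> real"
    and \<gamma> :: real
begin

abbreviation V :: "('x \<Rightarrow> 'i \<Rightarrow> 'a) \<Rightarrow> 'x \<Rightarrow> real" where
  "V \<equiv> safety_value f h \<gamma>"

abbreviation partial_value :: "'i list \<Rightarrow> ('x \<Rightarrow> 'i \<Rightarrow> 'a) \<Rightarrow> ('x \<Rightarrow> 'i \<Rightarrow> 'a) \<Rightarrow> 'x \<Rightarrow> nat \<Rightarrow> real" where
  "partial_value ord p q x j \<equiv> V p (f x (partial_joint ord p q x j))"

lemma upd_value_old:
  "distinct ord \<Longrightarrow> j < length ord \<Longrightarrow>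
    upd_value f h \<gamma> ord p q x j (p x (ord ! j)) = partial_value ord p q x j"
  by (simp add: upd_value_def partial_joint_upd_old)

lemma upd_value_new:
  "j < length ord \<Longrightarrow> upd_value f h \<gamma> ord p q x j (q x (ord ! j)) = partial_value ord p q x (Suc j)"
  by (simp add: upd_value_def partial_joint_upd_new)

lemma maspi_step_partial_value_mono:
  assumes "distinct ord" "valid_policy U p" "maspi_step U f h \<gamma> ord p q"
    and "j1 \<le> j2" "j2 \<le> length ord"
  shows "partial_value ord p q x j1 \<le> partial_value ord p q x j2"
proof (rule lift_Suc_mono_le_ivl[where N = "{..<length ord}"])
  fix j assume j: "j \<in> {..<length ord}"
  have "p x (ord ! j) \<in> U (ord ! j)"
    using assms(2) by (simp add: valid_policy_def)
  with assms(3) j have "upd_value f h \<gamma> ord p q x j (p x (ord ! j))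
      \<le> upd_value f h \<gamma> ord p q x j (q x (ord ! j))"
    by (simp add: maspi_step_def)
  with j show "partial_value ord p q x j \<le> partial_value ord p q x (Suc j)"
    by (simp add: upd_value_old[OF assms(1)] upd_value_new)
qed (use assms in auto)

lemma maspi_step_greedy:
  assumes "agent_ordering ord" "valid_policy U p" "maspi_step U f h \<gamma> ord p q"
  shows "V p (f x (p x)) \<le> V p (f x (q x))"
  using maspi_step_partial_value_mono[OF _ assms(2,3), of 0 "length ord" x] assms(1)
  by (simp add: agent_ordering_def partial_joint_0 partial_joint_length)

text \<open>Under the tie-breaking rule an agent only changes its action at a state where this strictly
  increases its one-step value; since the partial values are nondecreasing along the ordering,
  that strict increase survives to the full joint update.\<close>

lemma maspi_tiebreak_greedy_strict:
  assumes "agent_ordering ord" "valid_policy U p" "maspi_step U f h \<gamma> ord p q"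
    and "maspi_tiebreak U f h \<gamma> ord p q" "q x \<noteq> p x"
  shows "V p (f x (p x)) < V p (f x (q x))"
proof -
  have distinct: "distinct ord" and onto: "set ord = UNIV"
    using assms(1) by (auto simp: agent_ordering_def)
  obtain i where "q x i \<noteq> p x i" using assms(5) by auto
  moreover obtain j where j: "j < length ord" "ord ! j = i"
    using onto by (metis UNIV_I in_set_conv_nth)
  ultimately obtain v where v: "v \<in> U (ord ! j)"
    "upd_value f h \<gamma> ord p q x j (p x (ord ! j)) < upd_value f h \<gamma> ord p q x j v"
    using assms(4) unfolding maspi_tiebreak_def by (meson not_le)
  moreover have "upd_value f h \<gamma> ord p q x j v \<le> upd_value f h \<gamma> ord p q x j (q x (ord ! j))"
    using assms(3) j(1) v(1) unfolding maspi_step_def by blast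
  ultimately have "partial_value ord p q x j < partial_value ord p q x (Suc j)"
    by (simp add: upd_value_old[OF distinct j(1)] upd_value_new[OF j(1)])
  moreover have "partial_value ord p q x 0 \<le> partial_value ord p q x j"
    and "partial_value ord p q x (Suc j) \<le> partial_value ord p q x (length ord)"
    using j(1) by (intro maspi_step_partial_value_mono[OF distinct assms(2,3)]; simp)+
  ultimately show ?thesis
    by (simp add: partial_joint_0 partial_joint_length[OF onto])
qed

lemma maspi_fixpoint_deviation:
  assumes "agent_ordering ord" "maspi_step U f h \<gamma> ord p p" "v \<in> U i"
  shows "V p (f x ((p x)(i := v))) \<le> V p (f x (p x))"
proof -
  obtain j where j: "j < length ord" "ord ! j = i"
    using assms(1) by (metis UNIV_I agent_ordering_def in_set_conv_nth)
  have "partial_joint ord p p x j = p x"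
    by (auto simp: partial_joint_def)
  moreover have "upd_value f h \<gamma> ord p p x j v \<le> upd_value f h \<gamma> ord p p x j (p x i)"
    using assms(2,3) j unfolding maspi_step_def by blast
  ultimately show ?thesis
    by (simp add: upd_value_def j(2))
qed

end

section \<open>The safety value function\<close>

locale discounted_safety_game = safety_game U f h \<gamma>
  for U :: "'i \<Rightarrow> 'a set" and f :: "'x \<Rightarrow> ('i \<Rightarrow> 'a) \<Rightarrow> 'x" and h \<gamma> +
  assumes gamma_pos: "0 < \<gamma>" and gamma_lt_1: "\<gamma> < 1"
    and h_bounded: "bdd_above (range (\<lambda>x. \<bar>h x\<bar>))"
begin

lemma traj_Suc: "traj f p x (Suc t) = traj f p (f x (p x)) t"
  by (simp add: traj_def funpow_Suc_right del: funpow.simps)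

lemma obtain_h_bound:
  obtains H where "\<And>x. \<bar>h x\<bar> \<le> H"
  using h_bounded by (auto simp: bdd_above_def)

lemma abs_discounted_le: "\<bar>\<gamma> ^ n * h y\<bar> \<le> \<bar>h y\<bar>"
  using gamma_pos gamma_lt_1 by (simp add: abs_mult mult_left_le_one_le power_le_one)

lemma obtain_discounted_lower_bound:
  obtains L where "\<And>n y. L \<le> \<gamma> ^ n * h y"
proof -
  obtain H where "\<And>x. \<bar>h x\<bar> \<le> H" using obtain_h_bound by blast
  then have "\<And>n y. - H \<le> \<gamma> ^ n * h y"
    using abs_discounted_le by (smt (verit))
  then show ?thesis by (rule that)
qed

lemma bdd_below_discounted_trajectory:
  "bdd_below (range (\<lambda>t. \<gamma> ^ (t + 1) * h (traj f p x t)))"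
proof -
  obtain L where "\<And>n y. L \<le> \<gamma> ^ n * h y" using obtain_discounted_lower_bound by metis
  then show ?thesis by (intro bdd_belowI2[where m = L])
qed

lemma safety_value_le: "V p x \<le> \<gamma> ^ (t + 1) * h (traj f p x t)"
  unfolding safety_value_def by (rule cINF_lower[OF bdd_below_discounted_trajectory]) simp

lemma bdd_below_safety_value: "bdd_below (range (V p))"
proof -
  obtain L where lower: "\<And>n y. L \<le> \<gamma> ^ n * h y"
    using obtain_discounted_lower_bound by metis
  have "L \<le> V p x" for x
    unfolding safety_value_def by (rule cINF_greatest) (blast intro: lower)+
  then show ?thesis unfolding bdd_below_def by blast
qed

lemma safety_value_bellman: "V p x = \<gamma> * min (h x) (V p (f x (p x)))"
proof (rule antisym)
  have "V p x / \<gamma> \<le> V p (f x (p x))"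
    unfolding safety_value_def[of f h \<gamma> p "f x (p x)"]
  proof (rule cINF_greatest)
    fix t
    have "V p x \<le> \<gamma> * (\<gamma> ^ (t + 1) * h (traj f p (f x (p x)) t))"
      using safety_value_le[of p x "Suc t"] by (simp add: traj_Suc mult.assoc)
    then show "V p x / \<gamma> \<le> \<gamma> ^ (t + 1) * h (traj f p (f x (p x)) t)"
      using gamma_pos by (simp add: divide_le_eq mult.commute)
  qed simp
  then have "V p x \<le> \<gamma> * V p (f x (p x))"
    using gamma_pos by (simp add: divide_le_eq mult.commute)
  moreover have "V p x \<le> \<gamma> * h x"
    using safety_value_le[of p x 0] by (simp add: traj_def)
  ultimately show "V p x \<le> \<gamma> * min (h x) (V p (f x (p x)))"
    by (simp add: min_def)
next
  show "\<gamma> * min (h x) (V p (f x (p x))) \<le> V p x"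
    unfolding safety_value_def[of f h \<gamma> p x]
  proof (rule cINF_greatest)
    fix t
    show "\<gamma> * min (h x) (V p (f x (p x))) \<le> \<gamma> ^ (t + 1) * h (traj f p x t)"
    proof (cases t)
      case 0
      then show ?thesis using gamma_pos by (simp add: traj_def)
    next
      case (Suc s)
      have "min (h x) (V p (f x (p x))) \<le> \<gamma> ^ (s + 1) * h (traj f p (f x (p x)) s)"
        using safety_value_le[of p "f x (p x)" s] by linarith
      then show ?thesis
        using Suc gamma_pos by (simp add: traj_Suc mult.assoc)
    qed
  qed simp
qed

lemma subsolution_le_safety_value:
  assumes "\<And>y. g y \<le> \<gamma> * min (h y) (g (f y (p y)))"
  shows "g x \<le> V p x"
proof -
  have "g y \<le> \<gamma> ^ (t + 1) * h (traj f p y t)" for t y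
  proof (induction t arbitrary: y)
    case 0
    have "\<gamma> * min (h y) (g (f y (p y))) \<le> \<gamma> * h y"
      using gamma_pos by (intro mult_left_mono) auto
    then show ?case
      using assms[of y] by (simp add: traj_def)
  next
    case (Suc t)
    have "g y \<le> \<gamma> * min (h y) (g (f y (p y)))" by (rule assms)
    also have "\<dots> \<le> \<gamma> * g (f y (p y))"
      using gamma_pos by (intro mult_left_mono) auto
    also have "\<dots> \<le> \<gamma> * (\<gamma> ^ (t + 1) * h (traj f p (f y (p y)) t))"
      using Suc gamma_pos by (intro mult_left_mono) auto
    finally show ?case by (simp add: traj_Suc mult.assoc)
  qed
  then show ?thesis
    unfolding safety_value_def by (intro cINF_greatest) auto
qed

lemma supersolution_unroll:
  assumes "\<And>y. \<gamma> * min (h y) (g (f y (p y))) \<le> g y"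
  shows "(\<exists>t<m. \<gamma> ^ (t + 1) * h (traj f p x t) \<le> g x) \<or> \<gamma> ^ m * g (traj f p x m) \<le> g x"
proof (induction m arbitrary: x)
  case 0
  show ?case by (simp add: traj_def)
next
  case (Suc m)
  define y where "y = f x (p x)"
  show ?case
  proof (cases "h x \<le> g y")
    case True
    then have "\<gamma> * h x \<le> g x" using assms[of x] by (simp add: y_def)
    then show ?thesis by (intro disjI1 exI[of _ 0]) (simp add: traj_def)
  next
    case False
    then have gy: "\<gamma> * g y \<le> g x" using assms[of x] by (simp add: y_def)
    from Suc.IH[of y] show ?thesis
    proof
      assume "\<exists>t<m. \<gamma> ^ (t + 1) * h (traj f p y t) \<le> g y"
      then obtain t where t: "t < m" "\<gamma> ^ (t + 1) * h (traj f p y t) \<le> g y" by blast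
      then have "\<gamma> * (\<gamma> ^ (t + 1) * h (traj f p y t)) \<le> g x"
        using mult_left_mono[OF t(2), of \<gamma>] gy gamma_pos by linarith
      then show ?thesis
        using t(1) by (intro disjI1 exI[of _ "Suc t"]) (simp add: traj_Suc y_def mult.assoc)
    next
      assume unrolled: "\<gamma> ^ m * g (traj f p y m) \<le> g y"
      have "\<gamma> * (\<gamma> ^ m * g (traj f p y m)) \<le> g x"
        using mult_left_mono[OF unrolled, of \<gamma>] gy gamma_pos by linarith
      then show ?thesis by (simp add: traj_Suc y_def mult.assoc)
    qed
  qed
qed

lemma safety_value_le_supersolution:
  assumes "bdd_below (range g)" "\<And>y. \<gamma> * min (h y) (g (f y (p y))) \<le> g y"
  shows "V p x \<le> g x"
proof (rule ccontr)
  assume gap: "\<not> V p x \<le> g x"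
  obtain H where H: "\<And>x. \<bar>h x\<bar> \<le> H" using obtain_h_bound by blast
  obtain B where B: "\<And>y. B \<le> g y"
    using assms(1) by (auto simp: bdd_below_def)
  have bound: "V p x - g x \<le> \<gamma> ^ m * (H - B)" for m
    using supersolution_unroll[OF assms(2), of m x]
  proof
    assume "\<exists>t<m. \<gamma> ^ (t + 1) * h (traj f p x t) \<le> g x"
    then obtain t where "\<gamma> ^ (t + 1) * h (traj f p x t) \<le> g x" by blast
    with safety_value_le[of p x t] gap show ?thesis by linarith
  next
    assume unrolled: "\<gamma> ^ m * g (traj f p x m) \<le> g x"
    have "\<gamma> * h (traj f p x m) \<le> H"
      using abs_discounted_le[of 1 "traj f p x m"] H[of "traj f p x m"] by simp
    then have "\<gamma> ^ m * (\<gamma> * h (traj f p x m)) \<le> \<gamma> ^ m * H"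
      using gamma_pos by (simp add: mult_left_mono)
    then have "V p x \<le> \<gamma> ^ m * H"
      using safety_value_le[of p x m] by (simp add: mult_ac)
    moreover have "\<gamma> ^ m * B \<le> \<gamma> ^ m * g (traj f p x m)"
      using B gamma_pos by (simp add: mult_left_mono)
    ultimately show ?thesis
      using unrolled by (simp add: right_diff_distrib)
  qed
  have "(\<lambda>m. \<gamma> ^ m * (H - B)) \<longlonglongrightarrow> 0"
    using gamma_pos gamma_lt_1 by (auto intro!: tendsto_mult_left_zero LIMSEQ_power_zero)
  then have "V p x - g x \<le> 0"
    by (rule LIMSEQ_le_const) (use bound in blast)
  then show False using gap by simp
qed

lemma safety_value_improvement:
  assumes "\<And>y. V p (f y (p y)) \<le> V p (f y (q y))"
  shows "V p x \<le> V q x"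
proof (rule subsolution_le_safety_value)
  fix y
  show "V p y \<le> \<gamma> * min (h y) (V p (f y (q y)))"
    using assms[of y] gamma_pos safety_value_bellman[of p y]
    by (simp add: mult_left_mono min.mono)
qed

lemma safety_value_no_improvement:
  assumes "\<And>y. V p (f y (q y)) \<le> V p (f y (p y))"
  shows "V q x \<le> V p x"
proof (rule safety_value_le_supersolution[OF bdd_below_safety_value])
  fix y
  show "\<gamma> * min (h y) (V p (f y (q y))) \<le> V p y"
    using assms[of y] gamma_pos safety_value_bellman[of p y]
    by (simp add: mult_left_mono min.mono)
qed

section \<open>Multi-agent safety policy iteration\<close>

lemma maspi_step_improves:
  assumes "agent_ordering ord" "valid_policy U p" "maspi_step U f h \<gamma> ord p q"
  shows "V p x \<le> V q x"
  by (rule safety_value_improvement[OF maspi_step_greedy[OF assms]])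

lemma maspi_fixpoint_nash:
  assumes "agent_ordering ord" "maspi_step U f h \<gamma> ord p p"
  shows "safety_nash U f h \<gamma> p"
  unfolding safety_nash_def
proof (intro allI impI)
  fix i and pi :: "'x \<Rightarrow> 'a" and x
  assume "\<forall>x. pi x \<in> U i"
  then show "V (\<lambda>y. (p y)(i := pi y)) x \<le> V p x"
    by (intro safety_value_no_improvement maspi_fixpoint_deviation[OF assms]) simp
qed

lemma maspi_tiebreak_eventually_constant:
  assumes "finite (UNIV :: 'x set)" "finite (UNIV :: 'i set)" "\<And>i. finite (U i)"
    and ords: "\<And>k. agent_ordering (ord k)" and valid: "\<And>k. valid_policy U (\<pi> k)"
    and steps: "\<And>k. maspi_step U f h \<gamma> (ord k) (\<pi> k) (\<pi> (Suc k))"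
    and tiebreak: "\<And>k. maspi_tiebreak U f h \<gamma> (ord k) (\<pi> k) (\<pi> (Suc k))"
  shows "\<exists>K. \<forall>k\<ge>K. \<pi> k = \<pi> K"
proof -
  define Q where "Q k x = V (\<pi> k) (f x (\<pi> k x))" for k x
  have "Q k x \<le> Q (Suc k) x" for k x
    using maspi_step_greedy[OF ords valid steps, of k x]
      maspi_step_improves[OF ords valid steps, of k "f x (\<pi> (Suc k) x)"]
    unfolding Q_def by linarith
  then have "mono Q" by (simp add: mono_iff_le_Suc le_fun_def)
  have "range Q \<subseteq> (\<lambda>p x. V p (f x (p x))) ` {p. valid_policy U p}"
    using valid by (auto simp: Q_def fun_eq_iff)
  moreover have "finite {p :: 'x \<Rightarrow> 'i \<Rightarrow> 'a. valid_policy U p}"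
    by (rule finite_valid_policies) (use assms in auto)
  ultimately have "finite (range Q)"
    by (auto intro: finite_subset)
  with \<open>mono Q\<close> obtain K where Q_const: "\<And>k. K \<le> k \<Longrightarrow> Q k = Q K"
    using mono_finite_range_eventually_const by blast
  have "\<pi> (Suc k) = \<pi> k" if "K \<le> k" for k
  proof (rule ccontr)
    assume "\<pi> (Suc k) \<noteq> \<pi> k"
    then obtain x where "\<pi> (Suc k) x \<noteq> \<pi> k x" by auto
    then have "Q k x < V (\<pi> k) (f x (\<pi> (Suc k) x))"
      unfolding Q_def by (rule maspi_tiebreak_greedy_strict[OF ords valid steps tiebreak])
    also have "\<dots> \<le> Q (Suc k) x"
      unfolding Q_def by (rule maspi_step_improves[OF ords valid steps])
    finally show False using Q_const[of k] Q_const[of "Suc k"] that by simp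
  qed
  then have "\<pi> (K + e) = \<pi> K" for e
    by (induction e) simp_all
  then show ?thesis by (metis le_Suc_ex)
qed

end

theorem theorem1:
  fixes U :: "'i::finite \<Rightarrow> 'a set"
    and f :: "'x::finite \<Rightarrow> ('i \<Rightarrow> 'a) \<Rightarrow> 'x"
    and h :: "'x \<Rightarrow> real"
    and \<gamma> :: real
    and \<pi> :: "nat \<Rightarrow> 'x \<Rightarrow> 'i \<Rightarrow> 'a"
    and ord :: "nat \<Rightarrow> 'i list"
  assumes U_fin: "\<And>i. finite (U i)"
    and U_ne: "\<And>i. U i \<noteq> {}"
    and gamma: "0 < \<gamma>" "\<gamma> < 1"
    and init: "valid_policy U (\<pi> 0)"
    and ords: "\<And>k. agent_ordering (ord k)"
    and steps: "\<And>k. maspi_step U f h \<gamma> (ord k) (\<pi> k) (\<pi> (Suc k))"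
  shows "(\<forall>k x. safety_value f h \<gamma> (\<pi> k) x \<le> safety_value f h \<gamma> (\<pi> (Suc k)) x)
       \<and> (\<forall>x. convergent (\<lambda>k. safety_value f h \<gamma> (\<pi> k) x))
       \<and> ((\<forall>k. maspi_tiebreak U f h \<gamma> (ord k) (\<pi> k) (\<pi> (Suc k))) \<longrightarrow>
           (\<exists>\<pi>s K. valid_policy U \<pi>s \<and> (\<forall>k\<ge>K. \<pi> k = \<pi>s) \<and> safety_nash U f h \<gamma> \<pi>s))"
proof -
  interpret discounted_safety_game U f h \<gamma>
    using gamma by unfold_locales (simp_all add: bdd_above_finite)
  have valid: "valid_policy U (\<pi> k)" for k
    by (cases k) (simp_all add: init maspi_step_valid[OF ords steps])
  have improves: "V (\<pi> k) x \<le> V (\<pi> (Suc k)) x" for k x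
    by (rule maspi_step_improves[OF ords valid steps])
  have "convergent (\<lambda>k. V (\<pi> k) x)" for x
  proof (rule incseq_convergent)
    show "incseq (\<lambda>k. V (\<pi> k) x)" using improves by (simp add: incseq_SucI)
    show "\<forall>k. V (\<pi> k) x \<le> \<gamma> * h x"
      using safety_value_le[of _ x 0] by (simp add: traj_def)
  qed (auto simp: convergent_def)
  moreover have "\<exists>\<pi>s K. valid_policy U \<pi>s \<and> (\<forall>k\<ge>K. \<pi> k = \<pi>s) \<and> safety_nash U f h \<gamma> \<pi>s"
    if "\<forall>k. maspi_tiebreak U f h \<gamma> (ord k) (\<pi> k) (\<pi> (Suc k))"
  proof -
    have "\<exists>K. \<forall>k\<ge>K. \<pi> k = \<pi> K"
      by (rule maspi_tiebreak_eventually_constant[where ord = ord])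
        (use U_fin ords valid steps that in auto)
    then obtain K where K: "\<forall>k\<ge>K. \<pi> k = \<pi> K" ..
    have "\<pi> (Suc K) = \<pi> K" using K[rule_format, of "Suc K"] by simp
    then have "maspi_step U f h \<gamma> (ord K) (\<pi> K) (\<pi> K)"
      using steps[of K] by simp
    then show ?thesis
      using K valid maspi_fixpoint_nash[OF ords] by blast
  qed
  ultimately show ?thesis using improves by blast
qed

end
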